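(* Let $g:A\to Y$ and $h:B\to Y$ be injective relations. Every synchronisation $\sigma$ of $(g,h)$ is the disjoint union of the paths it contains: $\sigma=\bigcup\{\gamma\subseteq\sigma:\gamma\text{ is a path}\}$, the paths in this union being pairwise disjoint; in particular every element of $\sigma$ (viewed as a subset of $A+B$) lies in a unique path, and that path is contained in $\sigma$.
   Context: A binary relation $R:A\to Z$ is injective if $aRz$ and $a'Rz$ imply $a=a'$; for $\alpha\subseteq A$, $R(\alpha)=\{z: aRz\text{ for some }a\in\alpha\}$. Given injective relations $g:A\to Y$ and $h:B\to Y$, a synchronisation is a pair $\langle\alpha,\beta\rangle$ with $\alpha\subseteq A$, $\beta\subseteq B$ and $g(\alpha)=h(\beta)$; such pairs are identified with subsets $\alpha+\beta$ of the disjoint union $A+B$, and inclusion, intersection, union and emptiness are taken via this identification. A path is a non-empty synchronisation that is minimal with respect to inclusion among non-empty synchronisations. *)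

theory Defs
  imports Main
begin

definition injective_rel :: "('a \<times> 'z) set \<Rightarrow> bool" where
  "injective_rel R \<longleftrightarrow> (\<forall>a a' z. (a, z) \<in> R \<and> (a', z) \<in> R \<longrightarrow> a = a')"

text \<open>A synchronisation, identified with the subset alpha + beta of the disjoint union A + B.\<close>
definition sync :: "('a \<times> 'y) set \<Rightarrow> ('b \<times> 'y) set \<Rightarrow> ('a + 'b) set \<Rightarrow> bool" where
  "sync g h S \<longleftrightarrow> g `` {a. Inl a \<in> S} = h `` {b. Inr b \<in> S}"

definition path :: "('a \<times> 'y) set \<Rightarrow> ('b \<times> 'y) set \<Rightarrow> ('a + 'b) set \<Rightarrow> bool" where
  "path g h S \<longleftrightarrow> sync g h S \<and> S \<noteq> {} \<and>
     (\<forall>T. sync g h T \<and> T \<noteq> {} \<and> T \<subseteq> S \<longrightarrow> T = S)"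

end

theory Submission
  imports Defs
begin

(* Injective relations commute with images of non-empty intersections and of
   differences, so synchronisations are closed under both operations.  Hence
   for an element x of some synchronisation, the intersection of all
   synchronisations containing x -- the synchronisation generated by x -- is
   again a synchronisation; it is a path, because removing a sub-synchronisation
   not containing x would leave a smaller synchronisation containing x.
   Conversely, a path through x meets every synchronisation containing x in a
   non-empty synchronisation, so by minimality it lies inside each of them.
   Thus the paths through x are exactly the synchronisation generated by x, and
   the theorem follows: this path exists, is unique, and lies in every
   synchronisation containing x. *)

text \<open>An injective relation preserves non-empty intersections: the preimages of a
  common image point in the various sets must all coincide.\<close>

lemma injective_rel_Image_INT:
  assumes inj: "injective_rel R" and I: "I \<noteq> {}"
  shows "R `` (\<Inter>i\<in>I. A i) = (\<Inter>i\<in>I. R `` A i)"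
proof
  show "(\<Inter>i\<in>I. R `` A i) \<subseteq> R `` (\<Inter>i\<in>I. A i)"
  proof
    fix z assume z: "z \<in> (\<Inter>i\<in>I. R `` A i)"
    obtain i0 where "i0 \<in> I" using I by blast
    then obtain a where a: "a \<in> A i0" "(a, z) \<in> R" using z by blast
    have "a \<in> A i" if "i \<in> I" for i
    proof -
      obtain a' where "a' \<in> A i" "(a', z) \<in> R" using z \<open>i \<in> I\<close> by blast
      with a(2) inj show ?thesis unfolding injective_rel_def by blast
    qed
    with a(2) show "z \<in> R `` (\<Inter>i\<in>I. A i)" by blast
  qed
qed blast

lemma injective_rel_Image_Diff:
  assumes "injective_rel R"
  shows "R `` (A - B) = R `` A - R `` B"
  using assms unfolding injective_rel_def by blast

lemma sync_Inter:
  assumes ig: "injective_rel g" and ih: "injective_rel h"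
    and F: "F \<noteq> {}" "\<And>T. T \<in> F \<Longrightarrow> sync g h T"
  shows "sync g h (\<Inter>F)"
proof -
  have "g `` {a. Inl a \<in> \<Inter>F} = g `` (\<Inter>T\<in>F. {a. Inl a \<in> T})"
    by (intro arg_cong[where f = "Image g"]) blast
  also have "\<dots> = (\<Inter>T\<in>F. g `` {a. Inl a \<in> T})"
    using injective_rel_Image_INT[OF ig F(1)] .
  also have "\<dots> = (\<Inter>T\<in>F. h `` {b. Inr b \<in> T})"
    using F(2) unfolding sync_def by simp
  also have "\<dots> = h `` (\<Inter>T\<in>F. {b. Inr b \<in> T})"
    using injective_rel_Image_INT[OF ih F(1)] by simp
  also have "\<dots> = h `` {b. Inr b \<in> \<Inter>F}"
    by (intro arg_cong[where f = "Image h"]) blast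
  finally show ?thesis unfolding sync_def .
qed

lemma sync_Int:
  assumes "injective_rel g" "injective_rel h" "sync g h S" "sync g h T"
  shows "sync g h (S \<inter> T)"
proof -
  have "sync g h (\<Inter>{S, T})" using assms by (intro sync_Inter) auto
  then show ?thesis by simp
qed

lemma sync_Diff:
  assumes ig: "injective_rel g" and ih: "injective_rel h"
    and S: "sync g h S" and T: "sync g h T"
  shows "sync g h (S - T)"
proof -
  have "{a. Inl a \<in> S - T} = {a. Inl a \<in> S} - {a. Inl a \<in> T}"
    and "{b. Inr b \<in> S - T} = {b. Inr b \<in> S} - {b. Inr b \<in> T}" by auto
  with S T show ?thesis
    unfolding sync_def by (simp add: injective_rel_Image_Diff[OF ig] injective_rel_Image_Diff[OF ih])
qed

definition generated_sync :: "('a \<times> 'y) set \<Rightarrow> ('b \<times> 'y) set \<Rightarrow> 'a + 'b \<Rightarrow> ('a + 'b) set" where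
  "generated_sync g h x = \<Inter>{T. sync g h T \<and> x \<in> T}"

lemma mem_generated_sync: "x \<in> generated_sync g h x"
  unfolding generated_sync_def by blast

lemma generated_sync_subset:
  "sync g h S \<Longrightarrow> x \<in> S \<Longrightarrow> generated_sync g h x \<subseteq> S"
  unfolding generated_sync_def by blast

lemma sync_generated_sync:
  assumes "injective_rel g" "injective_rel h" "sync g h S" "x \<in> S"
  shows "sync g h (generated_sync g h x)"
  unfolding generated_sync_def using assms by (intro sync_Inter) auto

text \<open>If \<open>x\<close> lies in some synchronisation, the synchronisation it generates is a
  path: a non-empty sub-synchronisation avoiding \<open>x\<close> could be cut away.\<close>

lemma path_generated_sync:
  assumes ig: "injective_rel g" and ih: "injective_rel h"
    and S: "sync g h S" and x: "x \<in> S"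
  shows "path g h (generated_sync g h x)"
  unfolding path_def
proof (intro conjI allI impI)
  let ?C = "generated_sync g h x"
  show sC: "sync g h ?C" using sync_generated_sync[OF assms] .
  show "?C \<noteq> {}" using mem_generated_sync by blast
  fix T assume T: "sync g h T \<and> T \<noteq> {} \<and> T \<subseteq> ?C"
  show "T = ?C"
  proof (cases "x \<in> T")
    case True
    then show ?thesis using T generated_sync_subset by blast
  next
    case False
    have "sync g h (?C - T)" using sync_Diff[OF ig ih sC] T by blast
    then have "?C \<subseteq> ?C - T" using False mem_generated_sync generated_sync_subset by blast
    then show ?thesis using T by blast
  qed
qed

text \<open>A path through \<open>x\<close> lies inside every synchronisation containing \<open>x\<close>,
  since its intersection with that synchronisation is a non-empty sub-synchronisation.\<close>

lemma path_subset_sync: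
  assumes "injective_rel g" "injective_rel h"
    and P: "path g h P" and S: "sync g h S" and x: "x \<in> P" "x \<in> S"
  shows "P \<subseteq> S"
proof -
  have "sync g h (P \<inter> S)" using sync_Int[OF assms(1,2) _ S] P unfolding path_def by blast
  then have "P \<inter> S = P" using P x unfolding path_def by blast
  then show ?thesis by blast
qed

lemma path_eq_generated_sync:
  assumes "injective_rel g" "injective_rel h" and P: "path g h P" and x: "x \<in> P"
  shows "P = generated_sync g h x"
proof -
  have sP: "sync g h P" using P unfolding path_def by blast
  show ?thesis
    using P generated_sync_subset[OF sP x] path_generated_sync[OF assms(1,2) sP x]
      mem_generated_sync unfolding path_def by blast
qed

theorem mainTheorem8:
  fixes g :: "('a \<times> 'y) set" and h :: "('b \<times> 'y) set" and \<sigma> :: "('a + 'b) set"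
  assumes "injective_rel g" and "injective_rel h" and "sync g h \<sigma>"
  shows "\<sigma> = \<Union>{\<gamma>. \<gamma> \<subseteq> \<sigma> \<and> path g h \<gamma>} \<and>
         (\<forall>\<gamma>1 \<gamma>2. \<gamma>1 \<subseteq> \<sigma> \<and> path g h \<gamma>1 \<and> \<gamma>2 \<subseteq> \<sigma> \<and> path g h \<gamma>2 \<and> \<gamma>1 \<noteq> \<gamma>2
             \<longrightarrow> \<gamma>1 \<inter> \<gamma>2 = {}) \<and>
         (\<forall>x\<in>\<sigma>. (\<exists>!\<gamma>. path g h \<gamma> \<and> x \<in> \<gamma>) \<and> (\<forall>\<gamma>. path g h \<gamma> \<and> x \<in> \<gamma> \<longrightarrow> \<gamma> \<subseteq> \<sigma>))"
proof -
  note unique = path_eq_generated_sync[OF assms(1,2)]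
  note generated = path_generated_sync[OF assms] generated_sync_subset[OF assms(3)]
    mem_generated_sync
  show ?thesis
  proof (intro conjI allI ballI impI)
    show "\<sigma> = \<Union>{\<gamma>. \<gamma> \<subseteq> \<sigma> \<and> path g h \<gamma>}"
    proof
      show "\<sigma> \<subseteq> \<Union>{\<gamma>. \<gamma> \<subseteq> \<sigma> \<and> path g h \<gamma>}"
      proof
        fix x assume x: "x \<in> \<sigma>"
        have "generated_sync g h x \<in> {\<gamma>. \<gamma> \<subseteq> \<sigma> \<and> path g h \<gamma>}"
          using generated(1,2)[OF x] by simp
        then show "x \<in> \<Union>{\<gamma>. \<gamma> \<subseteq> \<sigma> \<and> path g h \<gamma>}"
          using mem_generated_sync by (rule UnionI)
      qed
    qed auto
  next
    fix \<gamma>1 \<gamma>2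
    assume "\<gamma>1 \<subseteq> \<sigma> \<and> path g h \<gamma>1 \<and> \<gamma>2 \<subseteq> \<sigma> \<and> path g h \<gamma>2 \<and> \<gamma>1 \<noteq> \<gamma>2"
    then show "\<gamma>1 \<inter> \<gamma>2 = {}" using unique by blast
  next
    fix x assume x: "x \<in> \<sigma>"
    show "\<exists>!\<gamma>. path g h \<gamma> \<and> x \<in> \<gamma>"
    proof (rule ex1I)
      show "path g h (generated_sync g h x) \<and> x \<in> generated_sync g h x"
        using generated(1)[OF x] mem_generated_sync by simp
    qed (simp add: unique)
  next
    fix x \<gamma> assume "x \<in> \<sigma>" "path g h \<gamma> \<and> x \<in> \<gamma>"
    then show "\<gamma> \<subseteq> \<sigma>" using path_subset_sync[OF assms(1,2) _ assms(3)] by blast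
  qed
qed

end
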